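(* Let $(N_0,c,w,P)$ be an RS-situation. Then there exist prices $w_i^*\in[c,p_i(q_i^c)]$, $i\in N$, such that for every $i\in N$ \[\Pi_i^{ret}(q_i^c;w_i^* )\ \ge\ \max_{S\subseteq N:\, i\in S}\Pi_i^{ret}(q_i^S;w(q_S^S)).\]
   Context: Let $c\in\mathbb{R}$. An RS-problem is a triple $(c,w,p)$ where $w:\mathbb{R}_+\to(c,+\infty)$ is decreasing (non-increasing) and continuous, and $p:\mathbb{R}_+\to\mathbb{R}$ is decreasing (non-increasing) and continuous, satisfies $p(0)>w(0)$, and there exists $q>0$ with $p(q)=c$. An RS-situation is a tuple $(N_0,c,w,P)$ where $N=\{1,\dots,n\}$ is the set of retailers, $0$ denotes the supplier, $N_0=N\cup\{0\}$, $P=(p_1,\dots,p_n)$, and $(c,w,p_i)$ is an RS-problem for each $i\in N$. For $q\ge0$ and $\omega\in\mathbb{R}$, $\Pi_i^{ret}(q;\omega)=(p_i(q)-\omega)q$. For nonempty $S\subseteq N$, $(q_i^S)_{i\in S}$ is a fixed optimal solution of: maximize $\sum_{i\in S}(p_i(q_i)-w(q_S))q_i$ over $q\in\mathbb{R}_+^{S}$ subject to $p_i(q_i)\ge w(q_S)$ for all $i\in S$, where $q_S=\sum_{i\in S}q_i$; $q_S^S=\sum_{i\in S}q_i^S$. For $i\in N$, $q_i^c$ is a fixed optimal solution of: maximize $(p_i(q)-c)q$ over $q\ge0$ subject to $p_i(q)\ge c$. *)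

theory Defs
  imports Complex_Main
begin

definition nonincr_on_nonneg :: "(real \<Rightarrow> real) \<Rightarrow> bool" where
  "nonincr_on_nonneg f \<longleftrightarrow> (\<forall>x y. 0 \<le> x \<longrightarrow> x \<le> y \<longrightarrow> f y \<le> f x)"

definition RS_problem :: "real \<Rightarrow> (real \<Rightarrow> real) \<Rightarrow> (real \<Rightarrow> real) \<Rightarrow> bool" where
  "RS_problem c w p \<longleftrightarrow>
     (\<forall>x\<ge>0. c < w x) \<and> nonincr_on_nonneg w \<and> continuous_on {0..} w \<and>
     nonincr_on_nonneg p \<and> continuous_on {0..} p \<and> p 0 > w 0 \<and>
     (\<exists>q>0. p q = c)"

definition RS_situation :: "nat \<Rightarrow> real \<Rightarrow> (real \<Rightarrow> real) \<Rightarrow> (nat \<Rightarrow> real \<Rightarrow> real) \<Rightarrow> bool" where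
  "RS_situation n c w P \<longleftrightarrow> (\<forall>i\<in>{1..n}. RS_problem c w (P i))"

definition Pi_ret :: "(real \<Rightarrow> real) \<Rightarrow> real \<Rightarrow> real \<Rightarrow> real" where
  "Pi_ret p q \<omega> = (p q - \<omega>) * q"

definition coal_feasible :: "(real \<Rightarrow> real) \<Rightarrow> (nat \<Rightarrow> real \<Rightarrow> real) \<Rightarrow> nat set \<Rightarrow> (nat \<Rightarrow> real) \<Rightarrow> bool" where
  "coal_feasible w P S q \<longleftrightarrow>
     (\<forall>i\<in>S. 0 \<le> q i) \<and> (\<forall>i\<in>S. P i (q i) \<ge> w (\<Sum>j\<in>S. q j))"

definition coal_obj :: "(real \<Rightarrow> real) \<Rightarrow> (nat \<Rightarrow> real \<Rightarrow> real) \<Rightarrow> nat set \<Rightarrow> (nat \<Rightarrow> real) \<Rightarrow> real" where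
  "coal_obj w P S q = (\<Sum>i\<in>S. (P i (q i) - w (\<Sum>j\<in>S. q j)) * q i)"

definition coal_optimal :: "(real \<Rightarrow> real) \<Rightarrow> (nat \<Rightarrow> real \<Rightarrow> real) \<Rightarrow> nat set \<Rightarrow> (nat \<Rightarrow> real) \<Rightarrow> bool" where
  "coal_optimal w P S q \<longleftrightarrow> coal_feasible w P S q \<and>
     (\<forall>q'. coal_feasible w P S q' \<longrightarrow> coal_obj w P S q' \<le> coal_obj w P S q)"

definition ind_optimal :: "real \<Rightarrow> (real \<Rightarrow> real) \<Rightarrow> real \<Rightarrow> bool" where
  "ind_optimal c p q \<longleftrightarrow> 0 \<le> q \<and> c \<le> p q \<and>
     (\<forall>q'. 0 \<le> q' \<longrightarrow> c \<le> p q' \<longrightarrow> (p q' - c) * q' \<le> (p q - c) * q)"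

end

theory Submission
  imports Defs
begin

text \<open>It suffices to charge every retailer the production cost \<open>c\<close>. In any coalition \<open>S\<close>
  retailer \<open>i\<close> buys a quantity that is feasible for its individual problem at price \<open>c\<close>, and pays the
  wholesale price \<open>w(q\<^sub>S\<^sup>S) > c\<close>; so its coalition profit is at most its profit at price \<open>c\<close> for the
  same quantity, which is at most the optimal individual profit \<open>\<Pi>\<^sub>i\<^sup>r\<^sup>e\<^sup>t(q\<^sub>i\<^sup>c; c)\<close>.\<close>

lemma Pi_ret_le_ind_optimal:
  assumes "ind_optimal c p qc" and "0 \<le> q" and "c \<le> \<omega>" and "\<omega> \<le> p q"
  shows "Pi_ret p q \<omega> \<le> Pi_ret p qc c"
proof -
  have "Pi_ret p q \<omega> \<le> (p q - c) * q"
    unfolding Pi_ret_def using assms(2,3) by (intro mult_right_mono) auto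
  also have "\<dots> \<le> (p qc - c) * qc"
    using assms unfolding ind_optimal_def by auto
  finally show ?thesis unfolding Pi_ret_def .
qed

lemma coal_feasible_member_bounds:
  assumes "coal_feasible w P S q" and "i \<in> S" and "\<forall>x\<ge>0. c < w x"
  shows "0 \<le> q i" and "c \<le> w (\<Sum>j\<in>S. q j)" and "w (\<Sum>j\<in>S. q j) \<le> P i (q i)"
proof -
  have "0 \<le> (\<Sum>j\<in>S. q j)"
    using assms(1) unfolding coal_feasible_def by (simp add: sum_nonneg)
  then show "c \<le> w (\<Sum>j\<in>S. q j)"
    using assms(3) by (simp add: less_imp_le)
  show "0 \<le> q i" and "w (\<Sum>j\<in>S. q j) \<le> P i (q i)"
    using assms(1,2) unfolding coal_feasible_def by auto
qed

theorem lemma5p4: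
  fixes n :: nat and c :: real and w :: "real \<Rightarrow> real" and P :: "nat \<Rightarrow> real \<Rightarrow> real"
    and qS :: "nat set \<Rightarrow> nat \<Rightarrow> real" and qc :: "nat \<Rightarrow> real"
  assumes "RS_situation n c w P"
    and "\<And>S. S \<subseteq> {1..n} \<Longrightarrow> S \<noteq> {} \<Longrightarrow> coal_optimal w P S (qS S)"
    and "\<And>i. i \<in> {1..n} \<Longrightarrow> ind_optimal c (P i) (qc i)"
  shows "\<exists>wstar :: nat \<Rightarrow> real. \<forall>i\<in>{1..n}.
           wstar i \<in> {c..P i (qc i)} \<and>
           Pi_ret (P i) (qc i) (wstar i) \<ge>
             Max ((\<lambda>S. Pi_ret (P i) (qS S i) (w (\<Sum>j\<in>S. qS S j))) ` {S. S \<subseteq> {1..n} \<and> i \<in> S})"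
proof (intro exI[of _ "\<lambda>_. c"] ballI conjI)
  fix i assume i: "i \<in> {1..n}"
  have opt: "ind_optimal c (P i) (qc i)" using assms(3) i .
  then show "c \<in> {c..P i (qc i)}" unfolding ind_optimal_def by simp
  have w_gt_c: "\<forall>x\<ge>0. c < w x"
    using assms(1) i unfolding RS_situation_def RS_problem_def by blast
  have coalition_le: "Pi_ret (P i) (qS S i) (w (\<Sum>j\<in>S. qS S j)) \<le> Pi_ret (P i) (qc i) c"
    if "S \<subseteq> {1..n}" and "i \<in> S" for S
  proof -
    have "coal_feasible w P S (qS S)"
      using assms(2) that unfolding coal_optimal_def by blast
    from coal_feasible_member_bounds[OF this \<open>i \<in> S\<close> w_gt_c] show ?thesis
      by (intro Pi_ret_le_ind_optimal[OF opt])
  qed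
  have "finite {S. S \<subseteq> {1..n} \<and> i \<in> S}" by (rule finite_subset[of _ "Pow {1..n}"]) auto
  moreover have "{S. S \<subseteq> {1..n} \<and> i \<in> S} \<noteq> {}" using i by auto
  ultimately show "Pi_ret (P i) (qc i) c \<ge>
      Max ((\<lambda>S. Pi_ret (P i) (qS S i) (w (\<Sum>j\<in>S. qS S j))) ` {S. S \<subseteq> {1..n} \<and> i \<in> S})"
    using coalition_le by (subst Max_le_iff) auto
qed

end
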